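(* Let $d\ge1$, $\ell\ge2$ and $n\ge1$ be integers, $N=(d-1)\ell+2$, and $t=\gcd(d+1,2(\ell-1))$. There exists a $(d+1)$-angulation $\mathscr{T}$ of $P_N$ with $\rho^{n(d-1)}(\mathscr{T})=\mathscr{T}$ if and only if $N\mid 2n$ or $N\mid tn$.
   Context: $P_N$ is a regular $N$-gon with corners labelled $0,\dots,N-1$ clockwise; $[x,y]=[y,x]$ denotes the segment between corners $x,y$. A $(d-1)$-diagonal of $P_N$ is a segment $[x,y]$ ($0\le x,y\le N-1$) with $|y-x|>1$ and $(d-1)\mid(|y-x|-1)$ (equivalently, a diagonal cutting $P_N$ into a $((d-1)\ell'+2)$-gon and a $((d-1)(\ell-\ell')+2)$-gon with $1<\ell'<\ell$). A partial $(d+1)$-angulation is a set of pairwise non-crossing $(d-1)$-diagonals; a $(d+1)$-angulation is a maximal one under inclusion. $\rho$ is rotation one step anticlockwise: $\rho([x,y])=[x-1,y-1]$, indices modulo $N$, extended to sets of diagonals. *)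

theory Defs
  imports Main
begin

definition is_diag :: "nat \<Rightarrow> nat \<Rightarrow> nat set \<Rightarrow> bool" where
  "is_diag d N D \<longleftrightarrow> (\<exists>x y. D = {x, y} \<and> x < y \<and> y < N \<and> y - x > 1 \<and> y - x < N - 1
      \<and> (d - 1) dvd (y - x - 1))"

definition interleave :: "nat set \<Rightarrow> nat set \<Rightarrow> bool" where
  "interleave D E \<longleftrightarrow> (\<exists>a b c e. D = {a, b} \<and> E = {c, e} \<and> a < c \<and> c < b \<and> b < e)"

definition crosses :: "nat set \<Rightarrow> nat set \<Rightarrow> bool" where
  "crosses D E \<longleftrightarrow> interleave D E \<or> interleave E D"

definition partial_angulation :: "nat \<Rightarrow> nat \<Rightarrow> nat set set \<Rightarrow> bool" where
  "partial_angulation d N T \<longleftrightarrow> (\<forall>D\<in>T. is_diag d N D) \<and> (\<forall>D\<in>T. \<forall>E\<in>T. \<not> crosses D E)"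

definition angulation :: "nat \<Rightarrow> nat \<Rightarrow> nat set set \<Rightarrow> bool" where
  "angulation d N T \<longleftrightarrow> partial_angulation d N T \<and>
     (\<forall>T'. partial_angulation d N T' \<and> T \<subseteq> T' \<longrightarrow> T' = T)"

text \<open>rho: rotation one step anticlockwise, x \<mapsto> x - 1 mod N.\<close>
definition rho :: "nat \<Rightarrow> nat set \<Rightarrow> nat set" where
  "rho N D = (\<lambda>x. (x + N - 1) mod N) ` D"

definition rho_set :: "nat \<Rightarrow> nat set set \<Rightarrow> nat set set" where
  "rho_set N T = rho N ` T"

end

theory Submission
  imports Defs
begin

text \<open>
  A chord of P_N joining corners x < y is encoded by the pair (x, y), and the corners x, ..., y
  span a sub-polygon with base (x, y). A family of pairwise noncrossing (d-1)-diagonals of an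
  interval [a, b] with b - a = (d - 1) L + 1 has at most L members, and exactly L if it is
  maximal and contains the base: any other member (x, y) splits it into the members nested
  in [x, y] and the rest, and the rest becomes a family of the same kind after contracting
  [x, y] to a side. Hence every (d+1)-angulation of P_N has l - 1 diagonals, and a partial one
  with l - 1 diagonals is maximal.

  Invariance under \<rho>^(n(d-1)) amounts to invariance under the rotation by
  g = gcd (n (d - 1)) N, of order k = N / g. A diagonal fixed by a nontrivial rotation is a
  diameter, and two distinct diameters cross; so for k \<ge> 3 all orbits have size k and
  k divides l - 1, hence also d + 1, which forces N | t n; for k \<le> 2 one gets N | 2 n (d - 1),
  which again implies N | 2 n or N | t n. Conversely, from a factorisation N = k P with
  P = (d - 1) q + p and either k p = d + 1, k q = l - 1, or k = 2, p = 1, 2 q = l, the fans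
  of chords from the corners i P to i P + (d - 1) j + 1 (j = 1, ..., q) form an angulation
  invariant under rotation by P, and P | n (d - 1) whenever N | 2 n or N | t n.
\<close>

section \<open>Noncrossing families of diagonals of an interval\<close>

text \<open>
  The pair (u, v) is a diagonal of the polygon with corners a, ..., b; the side (a, b) counts
  as one, so that a family is closed under splitting along any of its members.
\<close>

definition interval_diagonal :: "nat \<Rightarrow> nat \<Rightarrow> nat \<Rightarrow> nat \<times> nat \<Rightarrow> bool" where
  "interval_diagonal m a b E \<longleftrightarrow>
     a \<le> fst E \<and> fst E + 2 \<le> snd E \<and> snd E \<le> b \<and> m dvd snd E - fst E - 1"

definition noncrossing :: "nat \<times> nat \<Rightarrow> nat \<times> nat \<Rightarrow> bool" where
  "noncrossing E E' \<longleftrightarrow>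
     \<not> (fst E < fst E' \<and> fst E' < snd E \<and> snd E < snd E') \<and>
     \<not> (fst E' < fst E \<and> fst E < snd E' \<and> snd E' < snd E)"

definition noncrossing_family :: "nat \<Rightarrow> nat \<Rightarrow> nat \<Rightarrow> (nat \<times> nat) set \<Rightarrow> bool" where
  "noncrossing_family m a b F \<longleftrightarrow>
     (\<forall>E\<in>F. interval_diagonal m a b E) \<and> (\<forall>E\<in>F. \<forall>E'\<in>F. noncrossing E E')"

definition maximal_noncrossing_family :: "nat \<Rightarrow> nat \<Rightarrow> nat \<Rightarrow> (nat \<times> nat) set \<Rightarrow> bool" where
  "maximal_noncrossing_family m a b F \<longleftrightarrow> noncrossing_family m a b F \<and>
     (\<forall>E. interval_diagonal m a b E \<and> (\<forall>E'\<in>F. noncrossing E E') \<longrightarrow> E \<in> F)"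

lemma noncrossing_sym: "noncrossing E E' \<longleftrightarrow> noncrossing E' E"
  unfolding noncrossing_def by auto

lemma noncrossing_nested_or_outside:
  assumes "noncrossing (x, y) (u, v)" "u < v"
  shows "(x \<le> u \<and> v \<le> y) \<or> ((u \<le> x \<or> y \<le> u) \<and> (v \<le> x \<or> y \<le> v))"
  using assms unfolding noncrossing_def by auto

lemma noncrossing_nested_outside:
  assumes "x \<le> u" "v \<le> y" "p \<le> x \<or> y \<le> p" "q \<le> x \<or> y \<le> q"
  shows "noncrossing (u, v) (p, q)"
  using assms unfolding noncrossing_def by auto

lemma noncrossing_map_prod_iff:
  assumes "strict_mono_on S f" "fst E \<in> S" "snd E \<in> S" "fst E' \<in> S" "snd E' \<in> S"
  shows "noncrossing (map_prod f f E) (map_prod f f E') \<longleftrightarrow> noncrossing E E'"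
  using assms strict_mono_on_less[OF assms(1)] unfolding noncrossing_def
  by (simp add: map_prod_def split_beta)

lemma noncrossing_family_finite: "noncrossing_family m a b F \<Longrightarrow> finite F"
  unfolding noncrossing_family_def interval_diagonal_def
  by (rule finite_subset[of _ "{..b} \<times> {..b}"]) auto

lemma noncrossing_family_inside:
  assumes "noncrossing_family m a b F"
  shows "noncrossing_family m x y {E\<in>F. x \<le> fst E \<and> snd E \<le> y}"
  using assms unfolding noncrossing_family_def interval_diagonal_def by auto

lemma noncrossing_family_outside:
  assumes "noncrossing_family m a b F" "(x, y) \<in> F" "E \<in> F" "\<not> (x \<le> fst E \<and> snd E \<le> y)"
  shows "(fst E \<le> x \<or> y \<le> fst E) \<and> (snd E \<le> x \<or> y \<le> snd E)"
proof -
  have "noncrossing (x, y) (fst E, snd E)" "fst E < snd E"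
    using assms(1-3) unfolding noncrossing_family_def interval_diagonal_def by auto
  then show ?thesis using noncrossing_nested_or_outside assms(4) by blast
qed

text \<open>
  collapse x y contracts the corners x + 1, ..., y - 1 of the polygon, so that the chord
  (x, y) becomes a side; expand x y is its inverse on the corners outside (x, y).
\<close>

definition collapse :: "nat \<Rightarrow> nat \<Rightarrow> nat \<Rightarrow> nat" where
  "collapse x y z = (if z \<le> x then z else z - (y - x - 1))"

definition expand :: "nat \<Rightarrow> nat \<Rightarrow> nat \<Rightarrow> nat" where
  "expand x y z = (if z \<le> x then z else z + (y - x - 1))"

lemma expand_collapse: "x < y \<Longrightarrow> z \<le> x \<or> y \<le> z \<Longrightarrow> expand x y (collapse x y z) = z"
  unfolding expand_def collapse_def by auto

lemma collapse_expand: "x < y \<Longrightarrow> collapse x y (expand x y z) = z"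
  unfolding expand_def collapse_def by auto

lemma expand_outside: "x < y \<Longrightarrow> expand x y z \<le> x \<or> y \<le> expand x y z"
  unfolding expand_def by auto

lemma strict_mono_expand: "x < y \<Longrightarrow> strict_mono (expand x y)"
  unfolding expand_def by (rule strict_monoI) auto

lemma strict_mono_on_collapse: "x < y \<Longrightarrow> strict_mono_on {z. z \<le> x \<or> y \<le> z} (collapse x y)"
  unfolding collapse_def by (rule strict_mono_onI) auto

lemma interval_diagonal_collapse:
  assumes "interval_diagonal m a b (x, y)" "interval_diagonal m a b (u, v)"
    and "u \<le> x \<or> y \<le> u" "v \<le> x \<or> y \<le> v" "\<not> (x \<le> u \<and> v \<le> y)"
  shows "interval_diagonal m a (b - (y - x - 1)) (collapse x y u, collapse x y v)"
proof (cases "u \<le> x \<and> y \<le> v")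
  case True
  have "y - x < v - u"
    using True assms(1,5) unfolding interval_diagonal_def by auto
  moreover have "collapse x y v - collapse x y u - 1 = (v - u - 1) - (y - x - 1)"
    using assms(1) True unfolding collapse_def interval_diagonal_def by auto
  moreover have "m dvd (v - u - 1) - (y - x - 1)"
    using assms(1,2) dvd_diff_nat[of m "v - u - 1" "y - x - 1"]
    unfolding interval_diagonal_def by simp
  ultimately show ?thesis
    using assms(1,2) True unfolding interval_diagonal_def collapse_def by auto
next
  case False
  then show ?thesis using assms unfolding collapse_def interval_diagonal_def by auto
qed

lemma interval_diagonal_expand:
  assumes "interval_diagonal m a b (x, y)" "interval_diagonal m a (b - (y - x - 1)) (u, v)"
  shows "interval_diagonal m a b (expand x y u, expand x y v)"
    and "\<not> (x \<le> expand x y u \<and> expand x y v \<le> y)"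
proof -
  have xy: "x + 2 \<le> y" "y \<le> b" "m dvd y - x - 1"
    using assms(1) unfolding interval_diagonal_def by auto
  show "interval_diagonal m a b (expand x y u, expand x y v)"
  proof (cases "u \<le> x \<and> x < v")
    case True
    then have "expand x y v - expand x y u - 1 = (v - u - 1) + (y - x - 1)"
      using assms(2) unfolding expand_def interval_diagonal_def by auto
    moreover have "m dvd (v - u - 1) + (y - x - 1)"
      using assms(2) xy(3) dvd_add[of m "v - u - 1" "y - x - 1"]
      unfolding interval_diagonal_def by simp
    ultimately show ?thesis
      using assms(2) xy True unfolding interval_diagonal_def expand_def by auto
  next
    case False
    then show ?thesis using assms(2) xy unfolding expand_def interval_diagonal_def by auto
  qed
  show "\<not> (x \<le> expand x y u \<and> expand x y v \<le> y)"
    using assms(2) xy unfolding expand_def interval_diagonal_def by auto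
qed

lemma noncrossing_family_collapse:
  assumes F: "noncrossing_family m a b F" and xy: "(x, y) \<in> F"
  defines "Out \<equiv> {E\<in>F. \<not> (x \<le> fst E \<and> snd E \<le> y)}"
  shows "noncrossing_family m a (b - (y - x - 1)) (map_prod (collapse x y) (collapse x y) ` Out)"
    and "card (map_prod (collapse x y) (collapse x y) ` Out) = card Out"
proof -
  let ?S = "{z. z \<le> x \<or> y \<le> z}"
  have dxy: "interval_diagonal m a b (x, y)" using F xy unfolding noncrossing_family_def by blast
  then have "x < y" unfolding interval_diagonal_def by simp
  have out: "fst E \<in> ?S \<and> snd E \<in> ?S" if "E \<in> Out" for E
    using noncrossing_family_outside[OF F xy] that unfolding Out_def by blast
  have "interval_diagonal m a (b - (y - x - 1)) (collapse x y u, collapse x y v)"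
    if "(u, v) \<in> Out" for u v
    using interval_diagonal_collapse[OF dxy, of u v] out[OF that] that F
    unfolding Out_def noncrossing_family_def by auto
  then have "\<forall>E\<in>Out. interval_diagonal m a (b - (y - x - 1)) (map_prod (collapse x y) (collapse x y) E)"
    by auto
  moreover have "noncrossing (map_prod (collapse x y) (collapse x y) E)
      (map_prod (collapse x y) (collapse x y) E')" if "E \<in> Out" "E' \<in> Out" for E E'
    using noncrossing_map_prod_iff[OF strict_mono_on_collapse[OF \<open>x < y\<close>]] out that F
    unfolding Out_def noncrossing_family_def by auto
  ultimately show "noncrossing_family m a (b - (y - x - 1))
      (map_prod (collapse x y) (collapse x y) ` Out)"
    unfolding noncrossing_family_def by auto
  have "inj_on (map_prod (collapse x y) (collapse x y)) Out"
    by (rule inj_on_inverseI[where g = "map_prod (expand x y) (expand x y)"])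
      (use out expand_collapse[OF \<open>x < y\<close>] in \<open>auto simp: map_prod_def split_beta\<close>)
  then show "card (map_prod (collapse x y) (collapse x y) ` Out) = card Out"
    by (rule card_image)
qed

lemma maximal_noncrossing_family_inside:
  assumes F: "maximal_noncrossing_family m a b F" and xy: "(x, y) \<in> F"
  shows "maximal_noncrossing_family m x y {E\<in>F. x \<le> fst E \<and> snd E \<le> y}"
  unfolding maximal_noncrossing_family_def
proof (intro conjI allI impI)
  have F': "noncrossing_family m a b F" using F unfolding maximal_noncrossing_family_def by simp
  then show "noncrossing_family m x y {E\<in>F. x \<le> fst E \<and> snd E \<le> y}"
    by (rule noncrossing_family_inside)
  fix E assume E: "interval_diagonal m x y E \<and> (\<forall>E'\<in>{E\<in>F. x \<le> fst E \<and> snd E \<le> y}. noncrossing E E')"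
  have "interval_diagonal m a b (x, y)" using F' xy unfolding noncrossing_family_def by blast
  then have "interval_diagonal m a b E" using E unfolding interval_diagonal_def by auto
  moreover have "noncrossing E E'" if "E' \<in> F" for E'
  proof (cases "x \<le> fst E' \<and> snd E' \<le> y")
    case True
    then show ?thesis using E that by blast
  next
    case False
    then show ?thesis
      using noncrossing_family_outside[OF F' xy that] noncrossing_nested_outside[of x "fst E" "snd E" y]
        E unfolding interval_diagonal_def by (metis prod.collapse)
  qed
  ultimately have "E \<in> F" using F unfolding maximal_noncrossing_family_def by blast
  then show "E \<in> {E\<in>F. x \<le> fst E \<and> snd E \<le> y}" using E unfolding interval_diagonal_def by simp
qed

lemma maximal_noncrossing_family_collapse:
  assumes F: "maximal_noncrossing_family m a b F" and xy: "(x, y) \<in> F"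
  defines "Out \<equiv> {E\<in>F. \<not> (x \<le> fst E \<and> snd E \<le> y)}"
  shows "maximal_noncrossing_family m a (b - (y - x - 1))
           (map_prod (collapse x y) (collapse x y) ` Out)"
  unfolding maximal_noncrossing_family_def
proof (intro conjI allI impI)
  have F': "noncrossing_family m a b F" using F unfolding maximal_noncrossing_family_def by simp
  show "noncrossing_family m a (b - (y - x - 1)) (map_prod (collapse x y) (collapse x y) ` Out)"
    using noncrossing_family_collapse(1)[OF F' xy] unfolding Out_def .
  have dxy: "interval_diagonal m a b (x, y)" using F' xy unfolding noncrossing_family_def by blast
  then have "x < y" unfolding interval_diagonal_def by simp
  fix E' assume E': "interval_diagonal m a (b - (y - x - 1)) E' \<and>
    (\<forall>E''\<in>map_prod (collapse x y) (collapse x y) ` Out. noncrossing E' E'')"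
  define E where "E = map_prod (expand x y) (expand x y) E'"
  have dE: "interval_diagonal m a b E" and E_out: "\<not> (x \<le> fst E \<and> snd E \<le> y)"
    using interval_diagonal_expand[OF dxy, of "fst E'" "snd E'"] E'
    unfolding E_def by (auto simp: map_prod_def split_beta)
  have "noncrossing E E''" if "E'' \<in> F" for E''
  proof (cases "x \<le> fst E'' \<and> snd E'' \<le> y")
    case True
    then show ?thesis
      using noncrossing_nested_outside[of x "fst E''" "snd E''" y "fst E" "snd E"]
        expand_outside[OF \<open>x < y\<close>] unfolding E_def noncrossing_def by auto
  next
    case False
    then have "E'' \<in> Out" using that unfolding Out_def by simp
    then have "noncrossing E' (map_prod (collapse x y) (collapse x y) E'')" using E' by blast
    moreover have "map_prod (expand x y) (expand x y) (map_prod (collapse x y) (collapse x y) E'') = E''"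
      using noncrossing_family_outside[OF F' xy that False] expand_collapse[OF \<open>x < y\<close>]
      by (simp add: map_prod_def split_beta)
    ultimately show ?thesis
      using noncrossing_map_prod_iff[OF strict_mono_expand[OF \<open>x < y\<close>],
          of E' "map_prod (collapse x y) (collapse x y) E''"]
      unfolding E_def by simp
  qed
  then have "E \<in> Out" using F dE E_out unfolding maximal_noncrossing_family_def Out_def by blast
  moreover have "map_prod (collapse x y) (collapse x y) E = E'"
    unfolding E_def using collapse_expand[OF \<open>x < y\<close>] by (simp add: map_prod_def split_beta)
  ultimately show "E' \<in> map_prod (collapse x y) (collapse x y) ` Out" by force
qed

lemma card_noncrossing_family_split:
  assumes "noncrossing_family m a b F" "(x, y) \<in> F"
  shows "card F = card {E\<in>F. x \<le> fst E \<and> snd E \<le> y}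
    + card (map_prod (collapse x y) (collapse x y) ` {E\<in>F. \<not> (x \<le> fst E \<and> snd E \<le> y)})"
proof -
  have "finite F" using assms(1) by (rule noncrossing_family_finite)
  then have "card F = card {E\<in>F. x \<le> fst E \<and> snd E \<le> y} + card {E\<in>F. \<not> (x \<le> fst E \<and> snd E \<le> y)}"
    by (subst card_Un_disjoint[symmetric]) (auto intro: arg_cong[where f = card])
  then show ?thesis using noncrossing_family_collapse(2)[OF assms] by simp
qed

lemma card_noncrossing_family_le:
  assumes "noncrossing_family m a b F"
  shows "card F \<le> (b - a - 1) div m"
  using assms
proof (induction "b - a" arbitrary: a b F rule: less_induct)
  case less
  show ?case
  proof (cases "F \<subseteq> {(a, b)}")
    case True
    show ?thesis
    proof (cases "F = {}")
      case False
      then have "interval_diagonal m a b (a, b)" using True less.prems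
        unfolding noncrossing_family_def by auto
      then have "m dvd b - a - 1" "b - a - 1 \<noteq> 0" unfolding interval_diagonal_def by auto
      then have "1 \<le> (b - a - 1) div m"
        by (metis dvd_div_eq_0_iff less_one linorder_not_less)
      moreover have "card F \<le> card {(a, b)}" using True by (intro card_mono) auto
      ultimately show ?thesis by simp
    qed simp
  next
    case False
    then obtain x y where xy: "(x, y) \<in> F" "(x, y) \<noteq> (a, b)" by auto
    let ?In = "{E\<in>F. x \<le> fst E \<and> snd E \<le> y}"
    let ?G = "map_prod (collapse x y) (collapse x y) ` {E\<in>F. \<not> (x \<le> fst E \<and> snd E \<le> y)}"
    have "interval_diagonal m a b (x, y)" using less.prems xy unfolding noncrossing_family_def by blast
    then have xy_le: "a \<le> x" "x + 2 \<le> y" "y \<le> b" "m dvd y - x - 1"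
      unfolding interval_diagonal_def by auto
    have "y - x < b - a" using xy xy_le by auto
    from less.hyps[OF this noncrossing_family_inside[OF less.prems]]
    have In: "card ?In \<le> (y - x - 1) div m" .
    have "b - (y - x - 1) - a < b - a" using xy_le by linarith
    from less.hyps[OF this noncrossing_family_collapse(1)[OF less.prems xy(1)]]
    have G: "card ?G \<le> (b - (y - x - 1) - a - 1) div m" .
    have "b - a - 1 = (y - x - 1) + (b - (y - x - 1) - a - 1)" using xy_le by linarith
    then have "(b - a - 1) div m = (y - x - 1) div m + (b - (y - x - 1) - a - 1) div m"
      using div_plus_div_distrib_dvd_left[OF xy_le(4)] by metis
    then show ?thesis using In G card_noncrossing_family_split[OF less.prems xy(1)] by linarith
  qed
qed

lemma maximal_noncrossing_family_singleton:
  assumes "maximal_noncrossing_family m a b F" "0 < m" "a + m + 1 \<le> b" "F \<subseteq> {(a, b)}"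
  shows "b = a + m + 1" "(a, b) \<in> F"
proof -
  have "interval_diagonal m a b (a, a + m + 1)"
    using assms(2,3) unfolding interval_diagonal_def by simp
  moreover have "\<forall>E'\<in>F. noncrossing (a, a + m + 1) E'"
    using assms(4) unfolding noncrossing_def by auto
  ultimately have "(a, a + m + 1) \<in> F"
    using assms(1) unfolding maximal_noncrossing_family_def by blast
  then show "b = a + m + 1" "(a, b) \<in> F" using assms(4) by auto
qed

lemma card_maximal_noncrossing_family_ge:
  assumes "maximal_noncrossing_family m a b F" "0 < m" "b - a = m * L + 1"
  shows "L \<le> card F"
  using assms
proof (induction "b - a" arbitrary: a b F L rule: less_induct)
  case less
  have F: "noncrossing_family m a b F"
    using less.prems(1) unfolding maximal_noncrossing_family_def by auto
  show ?case
  proof (cases "F \<subseteq> {(a, b)}")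
    case True
    show ?thesis
    proof (cases "L = 0")
      case False
      then have "m \<le> m * L" by simp
      then have "a + m + 1 \<le> b" using less.prems(3) by linarith
      note maximal_noncrossing_family_singleton[OF less.prems(1,2) this True]
      then have "L = 1" "F \<noteq> {}" using less.prems(2,3) by auto
      then show ?thesis using noncrossing_family_finite[OF F] by (simp add: Suc_le_eq card_gt_0_iff)
    qed simp
  next
    case False
    then obtain x y where xy: "(x, y) \<in> F" "(x, y) \<noteq> (a, b)" by auto
    let ?In = "{E\<in>F. x \<le> fst E \<and> snd E \<le> y}"
    let ?G = "map_prod (collapse x y) (collapse x y) ` {E\<in>F. \<not> (x \<le> fst E \<and> snd E \<le> y)}"
    have "interval_diagonal m a b (x, y)" using F xy unfolding noncrossing_family_def by blast
    then have xy_le: "a \<le> x" "x + 2 \<le> y" "y \<le> b" "m dvd y - x - 1"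
      unfolding interval_diagonal_def by auto
    then obtain c where "y - x - 1 = m * c" by blast
    then have c: "y - x = m * c + 1" using xy_le(2) by linarith
    have "m * c \<le> m * L" using xy_le c less.prems(3) by linarith
    then have "c \<le> L" using less.prems(2) by simp
    have "y - x < b - a" using xy xy_le by auto
    from less.hyps[OF this maximal_noncrossing_family_inside[OF less.prems(1) xy(1)] less.prems(2) c]
    have In: "c \<le> card ?In" .
    have "b - (y - x - 1) - a < b - a" using xy_le by linarith
    moreover have "b - (y - x - 1) - a = m * (L - c) + 1"
      using xy_le c less.prems(3) \<open>c \<le> L\<close> by (simp add: diff_mult_distrib2)
    ultimately have G: "L - c \<le> card ?G"
      using less.hyps[OF _ maximal_noncrossing_family_collapse[OF less.prems(1) xy(1)] less.prems(2)]
      by blast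
    show ?thesis using In G \<open>c \<le> L\<close> card_noncrossing_family_split[OF F xy(1)] by linarith
  qed
qed

lemma card_maximal_noncrossing_family:
  assumes "maximal_noncrossing_family m a b F" "0 < m" "b - a = m * L + 1"
  shows "card F = L"
  using card_noncrossing_family_le[of m a b F] card_maximal_noncrossing_family_ge[OF assms] assms
  by (simp add: maximal_noncrossing_family_def)

section \<open>Partial angulations as families of interval diagonals\<close>

definition endpoint_pairs :: "nat set set \<Rightarrow> (nat \<times> nat) set" where
  "endpoint_pairs T = {(x, y). x < y \<and> {x, y} \<in> T}"

lemma doubleton_ordered_eq_iff:
  "(x::nat) < y \<Longrightarrow> u < v \<Longrightarrow> {x, y} = {u, v} \<longleftrightarrow> x = u \<and> y = v"
  unfolding doubleton_eq_iff using less_asym by blast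

lemma is_diag_obtain:
  assumes "is_diag d N D"
  obtains x y where "x < y" "y < N" "D = {x, y}"
  using assms unfolding is_diag_def by blast

lemma is_diag_doubleton_iff:
  assumes "x < y"
  shows "is_diag d N {x, y} \<longleftrightarrow>
    interval_diagonal (d - 1) 0 (N - 1) (x, y) \<and> (x, y) \<noteq> (0, N - 1)"
proof -
  have "is_diag d N {x, y} \<longleftrightarrow> y < N \<and> 1 < y - x \<and> y - x < N - 1 \<and> (d - 1) dvd y - x - 1"
    unfolding is_diag_def using assms by (auto simp: doubleton_ordered_eq_iff)
  then show ?thesis unfolding interval_diagonal_def using assms by auto
qed

lemma interleave_doubleton_iff:
  assumes "x < y" "u < v"
  shows "interleave {x, y} {u, v} \<longleftrightarrow> x < u \<and> u < y \<and> y < v"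
proof
  assume "interleave {x, y} {u, v}"
  then obtain a b c e where abce: "{x, y} = {a, b}" "{u, v} = {c, e}" "a < c" "c < b" "b < e"
    unfolding interleave_def by blast
  then have "x = a \<and> y = b" "u = c \<and> v = e"
    using assms doubleton_ordered_eq_iff[of x y] doubleton_ordered_eq_iff[of u v]
    by (metis less_trans)+
  then show "x < u \<and> u < y \<and> y < v" using abce by simp
qed (auto simp: interleave_def)

lemma crosses_doubleton_iff:
  assumes "x < y" "u < v"
  shows "crosses {x, y} {u, v} \<longleftrightarrow> \<not> noncrossing (x, y) (u, v)"
  using assms unfolding crosses_def interleave_doubleton_iff[OF assms]
    interleave_doubleton_iff[OF assms(2,1)] noncrossing_def by auto

lemma endpoint_pairs_insert:
  "u < v \<Longrightarrow> endpoint_pairs (insert {u, v} T) = insert (u, v) (endpoint_pairs T)"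
  unfolding endpoint_pairs_def by (auto simp: doubleton_ordered_eq_iff)

lemma endpoint_pairs_doubletons:
  "\<forall>E\<in>S. fst E < snd E \<Longrightarrow> endpoint_pairs ((\<lambda>E. {fst E, snd E}) ` S) = S"
  unfolding endpoint_pairs_def by (force simp: doubleton_ordered_eq_iff)

lemma card_endpoint_pairs:
  assumes "\<forall>D\<in>T. is_diag d N D"
  shows "card (endpoint_pairs T) = card T"
proof -
  have "inj_on (\<lambda>(x, y). {x, y}) (endpoint_pairs T)"
    unfolding endpoint_pairs_def by (auto intro!: inj_onI simp: doubleton_ordered_eq_iff)
  moreover have "(\<lambda>(x, y). {x, y}) ` endpoint_pairs T = T"
  proof
    show "(\<lambda>(x, y). {x, y}) ` endpoint_pairs T \<subseteq> T" unfolding endpoint_pairs_def by auto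
    show "T \<subseteq> (\<lambda>(x, y). {x, y}) ` endpoint_pairs T"
    proof
      fix D assume "D \<in> T"
      then obtain x y where "x < y" "y < N" "D = {x, y}" using assms is_diag_obtain by blast
      then show "D \<in> (\<lambda>(x, y). {x, y}) ` endpoint_pairs T"
        using \<open>D \<in> T\<close> unfolding endpoint_pairs_def by auto
    qed
  qed
  ultimately show ?thesis using card_image by fastforce
qed

lemma partial_angulation_iff_endpoint_pairs:
  assumes "\<forall>D\<in>T. is_diag d N D"
  shows "partial_angulation d N T \<longleftrightarrow>
    (\<forall>E\<in>endpoint_pairs T. \<forall>E'\<in>endpoint_pairs T. noncrossing E E')"
proof
  assume pa: "partial_angulation d N T"
  have "noncrossing (x, y) (u, v)"
    if "(x, y) \<in> endpoint_pairs T" "(u, v) \<in> endpoint_pairs T" for x y u v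
  proof -
    have xy: "x < y" "{x, y} \<in> T" and uv: "u < v" "{u, v} \<in> T"
      using that unfolding endpoint_pairs_def by simp_all
    have "\<not> crosses {x, y} {u, v}"
      using pa xy(2) uv(2) unfolding partial_angulation_def by simp
    then show ?thesis using crosses_doubleton_iff[OF xy(1) uv(1)] by simp
  qed
  then show "\<forall>E\<in>endpoint_pairs T. \<forall>E'\<in>endpoint_pairs T. noncrossing E E'"
    by (simp add: Ball_def split_paired_all)
next
  assume nc: "\<forall>E\<in>endpoint_pairs T. \<forall>E'\<in>endpoint_pairs T. noncrossing E E'"
  have "\<not> crosses D D'" if D: "D \<in> T" and D': "D' \<in> T" for D D'
  proof -
    obtain x y where xy: "x < y" "y < N" "D = {x, y}" using assms D is_diag_obtain by blast
    obtain u v where uv: "u < v" "v < N" "D' = {u, v}" using assms D' is_diag_obtain by blast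
    have "(x, y) \<in> endpoint_pairs T" "(u, v) \<in> endpoint_pairs T"
      using xy uv D D' unfolding endpoint_pairs_def by simp_all
    then have "noncrossing (x, y) (u, v)" using nc by blast
    then show ?thesis using crosses_doubleton_iff[OF xy(1) uv(1)] xy(3) uv(3) by simp
  qed
  then show "partial_angulation d N T" using assms unfolding partial_angulation_def by blast
qed

lemma finite_partial_angulation: "partial_angulation d N T \<Longrightarrow> finite T"
  unfolding partial_angulation_def is_diag_def
  by (rule finite_subset[of _ "Pow {..<N}"]) auto

section \<open>Rotations\<close>

lemma inj_on_funpow_orbit:
  assumes "\<forall>y\<in>A. \<forall>j. 0 < j \<and> j < k \<longrightarrow> (f ^^ j) y \<noteq> y" "\<And>i. (f ^^ i) x \<in> A"
  shows "inj_on (\<lambda>j. (f ^^ j) x) {..<k}"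
proof (rule linorder_inj_onI)
  fix i j assume "i < j" "j \<in> {..<k}"
  have "(f ^^ (j - i)) ((f ^^ i) x) \<noteq> (f ^^ i) x"
    using assms \<open>i < j\<close> \<open>j \<in> {..<k}\<close> by simp
  moreover have "(f ^^ (j - i)) ((f ^^ i) x) = (f ^^ j) x"
    using \<open>i < j\<close> by (metis funpow_add le_add_diff_inverse2 less_imp_le o_apply)
  ultimately show "(f ^^ i) x \<noteq> (f ^^ j) x" by simp
qed auto

lemma funpow_orbit_preimage:
  assumes "0 < k" "(f ^^ k) x = x" "(f ^^ k) y = y" "f y = (f ^^ i) x"
  shows "y \<in> (\<lambda>j. (f ^^ j) x) ` {..<k}"
proof -
  have "y = (f ^^ (k - 1)) (f y)"
    using assms(1,3) by (metis Suc_diff_1 funpow_Suc_right o_apply)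
  also have "\<dots> = (f ^^ (k - 1 + i)) x" using assms(4) by (simp add: funpow_add)
  also have "\<dots> = (f ^^ ((k - 1 + i) mod k)) x"
    using funpow_mod_eq[where f = f and n = k and x = x] assms(2) by simp
  finally show ?thesis using assms(1) by auto
qed

lemma card_dvd_of_fixpoint_free_funpow:
  assumes "finite A" "f ` A \<subseteq> A" "0 < k" "\<forall>x\<in>A. (f ^^ k) x = x"
    and "\<forall>x\<in>A. \<forall>j. 0 < j \<and> j < k \<longrightarrow> (f ^^ j) x \<noteq> x"
  shows "k dvd card A"
  using assms(1,2,4,5)
proof (induction A rule: finite_psubset_induct)
  case (psubset A)
  show ?case
  proof (cases "A = {}")
    case False
    then obtain x where x: "x \<in> A" by blast
    have closed: "(f ^^ j) y \<in> A" if "y \<in> A" for j y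
      using that psubset.prems(1) by (induction j) auto
    define Orb where "Orb = (\<lambda>j. (f ^^ j) x) ` {..<k}"
    have "Orb \<subseteq> A" unfolding Orb_def using closed x by blast
    have "card Orb = k"
      using inj_on_funpow_orbit[OF psubset.prems(3) closed[OF x]] unfolding Orb_def
      by (simp add: card_image)
    have "f y \<notin> Orb" if y: "y \<in> A - Orb" for y
    proof
      assume "f y \<in> Orb"
      then obtain i where i: "f y = (f ^^ i) x" unfolding Orb_def by blast
      have "(f ^^ k) x = x" "(f ^^ k) y = y" using psubset.prems(2) x y by auto
      from funpow_orbit_preimage[OF assms(3) this i] have "y \<in> Orb" unfolding Orb_def .
      then show False using y by simp
    qed
    then have "f ` (A - Orb) \<subseteq> A - Orb" using psubset.prems(1) by blast
    moreover have "A - Orb \<subset> A" using x \<open>Orb \<subseteq> A\<close> assms(3) unfolding Orb_def by auto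
    ultimately have "k dvd card (A - Orb)" using psubset.IH psubset.prems(2,3) by blast
    moreover have "card (A - Orb) + k = card A"
      using card_Diff_subset[OF finite_subset[OF \<open>Orb \<subseteq> A\<close> psubset.hyps] \<open>Orb \<subseteq> A\<close>]
        card_mono[OF psubset.hyps \<open>Orb \<subseteq> A\<close>] \<open>card Orb = k\<close> by simp
    ultimately show ?thesis by (metis dvd_add_left_iff dvd_refl)
  qed simp
qed

definition rot :: "nat \<Rightarrow> nat \<Rightarrow> nat set \<Rightarrow> nat set" where
  "rot N a D = (\<lambda>x. (x + a) mod N) ` D"

lemma rot_rot: "rot N a (rot N b D) = rot N (b + a) D"
  unfolding rot_def image_image by (simp add: mod_add_left_eq add.assoc)

lemma rot_mod: "rot N (a mod N) D = rot N a D"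
  unfolding rot_def by (simp add: mod_add_right_eq)

lemma rot_0: "D \<subseteq> {..<N} \<Longrightarrow> rot N 0 D = D"
  unfolding rot_def by (force simp: subset_iff)

lemma funpow_rot: "D \<subseteq> {..<N} \<Longrightarrow> (rot N a ^^ j) D = rot N (j * a) D"
  by (induction j) (simp_all add: rot_0 rot_rot add.commute)

lemma funpow_rho_set:
  assumes "\<forall>D\<in>T. D \<subseteq> {..<N}" "0 < N"
  shows "(rho_set N ^^ j) T = rot N (j * (N - 1)) ` T"
proof -
  have "rho N = rot N (N - 1)" unfolding rho_def rot_def using assms(2) by (intro ext) simp
  then have "(rho_set N ^^ j) T = (rot N (N - 1) ^^ j) ` T"
    unfolding rho_set_def by (induction j) (simp_all add: image_image)
  also have "\<dots> = rot N (j * (N - 1)) ` T" using assms(1) funpow_rot by (auto intro: image_cong)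
  finally show ?thesis .
qed

lemma rot_image_mult:
  assumes "\<forall>D\<in>T. D \<subseteq> {..<N}" "rot N a ` T = T"
  shows "rot N (c * a) ` T = T"
proof (induction c)
  case 0
  then show ?case using assms(1) rot_0 by (simp add: image_cong)
next
  case (Suc c)
  have "rot N (Suc c * a) ` T = rot N a ` rot N (c * a) ` T"
    by (simp add: image_image rot_rot add.commute)
  then show ?case using Suc assms(2) by simp
qed

lemma rot_image_gcd:
  assumes "\<forall>D\<in>T. D \<subseteq> {..<N}" "rot N a ` T = T"
  shows "rot N (gcd a N) ` T = T"
proof (cases "a = 0")
  case True
  have "rot N N D = rot N 0 D" for D using rot_mod[of N N D] by simp
  moreover have "rot N 0 ` T = T" using rot_image_mult[OF assms, of 0] by simp
  ultimately show ?thesis using True by simp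
next
  case False
  then obtain x y where xy: "a * x = N * y + gcd a N" using bezout_nat by blast
  have "rot N (gcd a N) D = rot N (x * a) D" for D
  proof -
    have "(x * a) mod N = gcd a N mod N" using xy by (simp add: mult.commute)
    then show ?thesis using rot_mod[of N "x * a" D] rot_mod[of N "gcd a N" D] by simp
  qed
  then show ?thesis using rot_image_mult[OF assms, of x] by simp
qed

lemma rot_doubleton_fixed:
  assumes "x < y" "y < N" "0 < a" "a < N" "rot N a {x, y} = {x, y}"
  shows "2 * a = N \<and> y = x + a"
proof -
  have "(x + a) mod N \<in> {x, y}" "(y + a) mod N \<in> {x, y}"
    using assms(5) unfolding rot_def by blast+
  moreover have "(x + a) mod N \<noteq> x" "(y + a) mod N \<noteq> y"
    using assms by (auto simp: mod_if)
  ultimately have "(x + a) mod N = y" "(y + a) mod N = x" by auto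
  then show ?thesis using assms by (auto simp: mod_if split: if_splits)
qed

lemma diameters_cross:
  assumes "2 * a = N" "x + a < N" "x' + a < N" "x \<noteq> x'" "0 < a"
  shows "crosses {x, x + a} {x', x' + a}"
  using assms crosses_doubleton_iff[of x "x + a" x' "x' + a"] unfolding noncrossing_def
  by auto

section \<open>Fans\<close>

text \<open>
  From each corner i P, i < k, the chords to the corners i P + m j + 1, j = 1, ..., q.
  The last one from the corner (k - 1) P ends at k P, i.e. wraps around to 0, when P = m q + 1.
\<close>

definition fan_family :: "nat \<Rightarrow> nat \<Rightarrow> nat \<Rightarrow> nat \<Rightarrow> nat set set" where
  "fan_family k P m q = (\<lambda>(i, j). {i * P, (i * P + m * j + 1) mod (k * P)}) ` ({..<k} \<times> {1..q})"

definition fan_pair :: "nat \<Rightarrow> nat \<Rightarrow> nat \<Rightarrow> nat \<Rightarrow> nat \<Rightarrow> nat \<times> nat" where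
  "fan_pair k P m i j =
     (if i * P + m * j + 1 < k * P then (i * P, i * P + m * j + 1) else (0, i * P))"

lemma fan_index_bound:
  fixes m q p P i k j :: nat
  assumes "P = m * q + p" "1 \<le> p" "i < k" "j \<le> q"
  shows "i * P + m * j + 1 \<le> k * P"
proof -
  have "m * j \<le> m * q" using assms(4) by simp
  moreover have "(i + 1) * P \<le> k * P" using assms(3) by (intro mult_le_mono1) simp
  moreover have "(i + 1) * P = i * P + P" by simp
  ultimately show ?thesis using assms(1,2) by linarith
qed

lemma fan_index_wrap:
  fixes m q p P i k j :: nat
  assumes "P = m * q + p" "1 \<le> p" "0 < m" "i < k" "j \<le> q" "\<not> i * P + m * j + 1 < k * P"
  shows "i = k - 1" "j = q" "p = 1"
proof -
  have "m * j \<le> m * q" using assms(5) by simp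
  have "(i + 1) * P \<le> k * P" using assms(4) by (intro mult_le_mono1) simp
  have "(i + 1) * P = i * P + P" by simp
  have "i * P + m * j + 1 = k * P" using fan_index_bound[OF assms(1,2,4,5)] assms(6) by simp
  then have "m * j = m * q" "p = 1" "(i + 1) * P = k * P"
    using \<open>m * j \<le> m * q\<close> \<open>(i + 1) * P \<le> k * P\<close> \<open>(i + 1) * P = i * P + P\<close> assms(1,2)
    by linarith+
  moreover have "0 < P" using assms(1,2) by simp
  ultimately have "j = q" "p = 1" "i + 1 = k" using assms(3) mult_right_cancel[of P "i + 1" k] by auto
  then show "i = k - 1" "j = q" "p = 1" by simp_all
qed

definition unwrapped_fan_indices :: "nat \<Rightarrow> nat \<Rightarrow> nat \<Rightarrow> nat \<Rightarrow> (nat \<times> nat) set" where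
  "unwrapped_fan_indices k P m q = {(i, j) \<in> {..<k} \<times> {1..q}. i * P + m * j + 1 < k * P}"

lemma card_unwrapped_fan_indices:
  fixes m q p P :: nat
  assumes "P = m * q + p" "1 \<le> p" "0 < m"
  shows "k * q \<le> card (unwrapped_fan_indices k P m q) + 1"
    and "p \<noteq> 1 \<Longrightarrow> card (unwrapped_fan_indices k P m q) = k * q"
proof -
  let ?I = "{..<k} \<times> {1..q}" and ?J = "unwrapped_fan_indices k P m q"
  have "finite ?J" unfolding unwrapped_fan_indices_def by (rule finite_subset[of _ ?I]) auto
  have wrap: "E \<in> ?J \<or> (E = (k - 1, q) \<and> p = 1)" if "E \<in> ?I" for E
  proof -
    obtain i j where "E = (i, j)" by fastforce
    then show ?thesis
      using that fan_index_wrap[OF assms, of i k j] unfolding unwrapped_fan_indices_def by auto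
  qed
  then have "?I \<subseteq> insert (k - 1, q) ?J" by blast
  then have "card ?I \<le> card (insert (k - 1, q) ?J)" using \<open>finite ?J\<close> by (intro card_mono) auto
  then show "k * q \<le> card ?J + 1" using \<open>finite ?J\<close> by (simp add: card_insert_if split: if_splits)
  assume "p \<noteq> 1"
  then have "?J = ?I" using wrap unfolding unwrapped_fan_indices_def by auto
  then show "card ?J = k * q" by simp
qed

lemma fan_pair_unwrapped:
  "(i, j) \<in> unwrapped_fan_indices k P m q \<Longrightarrow> fan_pair k P m i j = (i * P, i * P + m * j + 1)"
  unfolding unwrapped_fan_indices_def fan_pair_def by simp

lemma inj_on_fan_pair_unwrapped:
  assumes "0 < P" "0 < m"
  shows "inj_on (\<lambda>(i, j). fan_pair k P m i j) (unwrapped_fan_indices k P m q)"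
proof (rule inj_onI, clarify)
  fix i j i' j'
  assume "(i, j) \<in> unwrapped_fan_indices k P m q" "(i', j') \<in> unwrapped_fan_indices k P m q"
    and "fan_pair k P m i j = fan_pair k P m i' j'"
  then have "i * P = i' * P" "m * j = m * j'" using fan_pair_unwrapped by auto
  then show "i = i' \<and> j = j'" using assms by simp
qed

lemma wrapped_fan_pair_notin_unwrapped:
  fixes m q p P :: nat
  assumes "P = m * q + p" "1 \<le> p" "3 \<le> k"
  shows "(0, (k - 1) * P) \<notin> (\<lambda>(i, j). fan_pair k P m i j) ` unwrapped_fan_indices k P m q"
proof
  assume "(0, (k - 1) * P) \<in> (\<lambda>(i, j). fan_pair k P m i j) ` unwrapped_fan_indices k P m q"
  then obtain i j where ij: "(i, j) \<in> unwrapped_fan_indices k P m q"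
    "fan_pair k P m i j = (0, (k - 1) * P)" by fastforce
  then have "i * P = 0" "i * P + m * j + 1 = (k - 1) * P" using fan_pair_unwrapped by auto
  moreover have "m * j \<le> m * q" using ij(1) unfolding unwrapped_fan_indices_def by simp
  moreover have "2 * P \<le> (k - 1) * P" using assms(3) by (intro mult_le_mono1) linarith
  ultimately show False using assms(1,2) by linarith
qed

lemma fan_family_eq:
  fixes m q p P :: nat
  assumes "P = m * q + p" "1 \<le> p"
  shows "fan_family k P m q =
    (\<lambda>E. {fst E, snd E}) ` (\<lambda>(i, j). fan_pair k P m i j) ` ({..<k} \<times> {1..q})"
  unfolding fan_family_def image_image
proof (rule image_cong[OF refl], clarify)
  fix i j assume "i < k" "j \<in> {1..q}"
  then have "i * P + m * j + 1 \<le> k * P" using fan_index_bound[OF assms] by simp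
  then show "{i * P, (i * P + m * j + 1) mod (k * P)} =
    {fst (fan_pair k P m i j), snd (fan_pair k P m i j)}"
    unfolding fan_pair_def by auto
qed

lemma rot_fan_doubleton:
  "rot (k * P) P {i * P, (i * P + m * j + 1) mod (k * P)}
    = {((i + 1) mod k) * P, (((i + 1) mod k) * P + m * j + 1) mod (k * P)}"
proof -
  have "(i * P + P) mod (k * P) = ((i + 1) mod k) * P"
    using mod_mult_mult2[of "i + 1" P k] by (simp add: algebra_simps)
  moreover have "((i * P + m * j + 1) mod (k * P) + P) mod (k * P)
      = (((i * P + P) mod (k * P)) + (m * j + 1)) mod (k * P)"
  proof -
    have "((i * P + m * j + 1) mod (k * P) + P) mod (k * P) = (i * P + m * j + 1 + P) mod (k * P)"
      by (rule mod_add_left_eq)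
    also have "i * P + m * j + 1 + P = (i * P + P) + (m * j + 1)" by simp
    finally show ?thesis by (simp only: mod_add_left_eq)
  qed
  ultimately show ?thesis unfolding rot_def by (simp add: add.assoc)
qed

lemma image_Suc_mod_lessThan: "0 < (k::nat) \<Longrightarrow> (\<lambda>i. (i + 1) mod k) ` {..<k} = {..<k}"
proof (intro equalityI subsetI)
  fix i assume "0 < k" "i \<in> {..<k}"
  have "((i + k - 1) mod k + 1) mod k = (i + k - 1 + 1) mod k" by (rule mod_add_left_eq)
  also have "\<dots> = i" using \<open>0 < k\<close> \<open>i \<in> {..<k}\<close> by simp
  finally show "i \<in> (\<lambda>i. (i + 1) mod k) ` {..<k}" using \<open>0 < k\<close> by (metis imageI lessThan_iff mod_less_divisor)
qed auto

lemma fan_family_rot: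
  assumes "0 < k"
  shows "rot (k * P) P ` fan_family k P m q = fan_family k P m q"
proof -
  let ?D = "\<lambda>(i, j). {i * P, (i * P + m * j + 1) mod (k * P)}"
  have "rot (k * P) P (?D E) = ?D (map_prod (\<lambda>i. (i + 1) mod k) id E)" for E
    by (cases E) (simp only: prod.case map_prod_simp id_apply rot_fan_doubleton)
  then have "rot (k * P) P ` fan_family k P m q
      = ?D ` map_prod (\<lambda>i. (i + 1) mod k) id ` ({..<k} \<times> {1..q})"
    unfolding fan_family_def image_image by simp
  also have "map_prod (\<lambda>i. (i + 1) mod k) id ` ({..<k} \<times> {1..q}) = {..<k} \<times> {1..q}"
    using image_Suc_mod_lessThan[OF assms] by (intro map_prod_surj_on) simp_all
  finally show ?thesis unfolding fan_family_def .
qed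

lemma noncrossing_same_block:
  assumes "i < i'" "fst E = i * P" "snd E \<le> (i + 1) * P" "fst E' = i' * P" "snd E' \<le> (i' + 1) * P"
  shows "noncrossing E E'"
proof -
  have "(i + 1) * P \<le> i' * P" using assms(1) by (intro mult_le_mono1) simp
  moreover have "(i + 1) * P = i * P + P" by simp
  ultimately have "snd E \<le> fst E'" "fst E \<le> fst E'" using assms(2-4) by linarith+
  then show ?thesis unfolding noncrossing_def by auto
qed

lemma noncrossing_blocks:
  assumes "fst E = i * P" "snd E \<le> (i + 1) * P" "fst E' = i' * P" "snd E' \<le> (i' + 1) * P"
  shows "noncrossing E E'"
  using noncrossing_same_block[of i i' E P E'] noncrossing_same_block[of i' i E' P E] assms
  by (cases i i' rule: linorder_cases) (auto simp: noncrossing_def noncrossing_sym)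

lemma noncrossing_wrap_block:
  assumes "i < k" "fst E = i * P" "snd E \<le> (i + 1) * P"
  shows "noncrossing (0, (k - 1) * P) E"
proof (cases "i = k - 1")
  case False
  then have "(i + 1) * P \<le> (k - 1) * P" using assms(1) by (intro mult_le_mono1) simp
  then show ?thesis using assms unfolding noncrossing_def by auto
qed (use assms in \<open>auto simp: noncrossing_def\<close>)

section \<open>Divisibility\<close>

lemma dvd_two_mul_or_dvd_gcd_mul:
  fixes m l n :: nat
  assumes dvd: "m * l + 2 dvd 2 * n * m"
  shows "m * l + 2 dvd 2 * n \<or> m * l + 2 dvd gcd (m + 2) (2 * (l - 1)) * n"
proof (cases "odd m")
  case True
  have "gcd m (l * m + 2) = gcd m 2" by (rule gcd_add_mult)
  moreover have "gcd m 2 = 1" using True by (simp add: coprime_iff_gcd_eq_1[symmetric])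
  ultimately have "coprime (m * l + 2) m" by (simp add: coprime_iff_gcd_eq_1 gcd.commute mult.commute)
  then show ?thesis using dvd coprime_dvd_mult_left_iff by blast
next
  case False
  then obtain a where a: "m = 2 * a" by (metis evenE)
  define M where "M = a * l + 1"
  have NM: "m * l + 2 = 2 * M" unfolding M_def a by simp
  have "coprime M a"
    using gcd_add_mult[of a l 1] unfolding M_def by (simp add: coprime_iff_gcd_eq_1 gcd.commute mult.commute)
  moreover have "2 * M dvd 2 * ((2 * n) * a)" using dvd unfolding NM unfolding a by (simp add: ac_simps)
  then have "M dvd (2 * n) * a" by (simp add: ac_simps)
  ultimately have "M dvd 2 * n" using coprime_dvd_mult_left_iff by blast
  show ?thesis
  proof (cases "odd M")
    case True
    then have "M dvd n" using \<open>M dvd 2 * n\<close> coprime_dvd_mult_right_iff[of M 2 n] by simp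
    then show ?thesis unfolding NM by simp
  next
    case False
    then have "odd a" "odd l" unfolding M_def by auto
    then obtain b c where "a = 2 * b + 1" "l = 2 * c + 1" by (auto elim!: oddE)
    then have e: "m + 2 = 4 * (b + 1)" "2 * (l - 1) = 4 * c" unfolding a by simp_all
    have "4 dvd m + 2" "4 dvd 2 * (l - 1)" unfolding e by simp_all
    then have "4 * n dvd gcd (m + 2) (2 * (l - 1)) * n" by simp
    moreover have "m * l + 2 dvd 4 * n" using \<open>M dvd 2 * n\<close> unfolding NM by simp
    ultimately show ?thesis using dvd_trans by blast
  qed
qed

lemma dvd_gcd_mul_of_orbit_dvd:
  fixes m l n k g :: nat
  assumes N: "m * l + 2 = k * g" and g: "g dvd n * m" and k: "k dvd l - 1" and l: "1 \<le> l"
  shows "m * l + 2 dvd gcd (m + 2) (2 * (l - 1)) * n"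
proof -
  have N': "m * l + 2 = m * (l - 1) + (m + 2)" using l by (cases l) auto
  obtain q where q: "l - 1 = k * q" using k by blast
  have "k dvd m + 2" using N N' k by (metis dvd_add_right_iff dvd_mult dvd_triv_left)
  then obtain p where p: "m + 2 = k * p" by blast
  have "0 < k" using p by (cases k) auto
  have "k * g = k * (m * q + p)" using N N' unfolding p q by (simp add: algebra_simps)
  then have g_eq: "g = m * q + p" using \<open>0 < k\<close> by simp
  have "g dvd n * m * q" using g by simp
  moreover have "n * m * q + n * p = n * g" unfolding g_eq by (simp add: algebra_simps)
  then have "g dvd n * m * q + n * p" by simp
  ultimately have np: "g dvd n * p" using dvd_add_right_iff by blast
  have "n * p * q * k = n * m * q + 2 * n * q"
  proof -
    have "n * p * q * k = n * q * (k * p)" by (simp add: ac_simps)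
    also have "\<dots> = n * m * q + 2 * n * q" unfolding p[symmetric] by (simp add: algebra_simps)
    finally show ?thesis .
  qed
  then have "g dvd n * m * q + 2 * n * q" using np by (metis dvd_mult2)
  then have "g dvd 2 * n * q" using \<open>g dvd n * m * q\<close> dvd_add_right_iff by blast
  then have "g dvd n * (2 * q)" by (simp add: ac_simps)
  then have "g dvd n * gcd p (2 * q)" using np by (simp add: gcd_mult_distrib_nat)
  then have "k * g dvd n * (k * gcd p (2 * q))" by (simp add: ac_simps)
  moreover have "gcd (m + 2) (2 * (l - 1)) = k * gcd p (2 * q)"
    unfolding p q by (simp add: gcd_mult_distrib_nat ac_simps)
  ultimately show ?thesis using N by (simp add: ac_simps)
qed

lemma fan_parameters_of_dvd_two_mul:
  fixes m l n :: nat
  assumes l: "2 \<le> l" and dvd: "m * l + 2 dvd 2 * n"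
  shows "(\<exists>k p q. k * p = m + 2 \<and> k * q = l - 1 \<and> m * q + p dvd n * m) \<or>
         (\<exists>q. 2 * q = l \<and> m * q + 1 dvd n * m)"
proof (cases "even l")
  case True
  then obtain q where q: "l = 2 * q" by (metis evenE)
  then have "2 * (m * q + 1) dvd 2 * n" using dvd by (simp add: ac_simps)
  then have "m * q + 1 dvd n" by (metis nat_mult_dvd_cancel1 zero_less_numeral)
  then show ?thesis using q by auto
next
  case False
  then obtain q where q: "l = 2 * q + 1" using oddE by blast
  show ?thesis
  proof (cases "even m")
    case True
    then obtain p where p: "m = 2 * p" by (metis evenE)
    have "2 * (m * q + (p + 1)) dvd 2 * n" using dvd unfolding q p by (simp add: algebra_simps)
    then have "m * q + (p + 1) dvd n" by (metis nat_mult_dvd_cancel1 zero_less_numeral)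
    moreover have "2 * (p + 1) = m + 2" "2 * q = l - 1" using p q by simp_all
    ultimately show ?thesis by (metis dvd_mult2)
  next
    case False
    then have "coprime (m * l + 2) 2" using \<open>odd l\<close> by simp
    then have "m * l + 2 dvd n" using dvd coprime_dvd_mult_right_iff by blast
    moreover have "m * l + 2 = m * (l - 1) + (m + 2)" using l by (cases l) auto
    ultimately have "1 * (m + 2) = m + 2 \<and> 1 * (l - 1) = l - 1 \<and> m * (l - 1) + (m + 2) dvd n * m"
      by simp
    then show ?thesis by blast
  qed
qed

lemma fan_parameters_of_dvd_gcd_mul:
  fixes m l n :: nat
  assumes l: "2 \<le> l" and dvd: "m * l + 2 dvd gcd (m + 2) (2 * (l - 1)) * n"
  shows "\<exists>k p q. k * p = m + 2 \<and> k * q = l - 1 \<and> m * q + p dvd n * m"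
proof -
  define t where "t = gcd (m + 2) (2 * (l - 1))"
  have N: "m * l + 2 = m * (l - 1) + (m + 2)" using l by (cases l) auto
  have "0 < t" unfolding t_def by simp
  show ?thesis
  proof (cases "t dvd l - 1")
    case True
    obtain p where p: "m + 2 = t * p" using t_def by (metis gcd_dvd1 dvdE)
    obtain q where q: "l - 1 = t * q" using True by blast
    have "m * l + 2 = t * (m * q + p)" using N unfolding p q by (simp add: algebra_simps)
    then have "m * q + p dvd n" using dvd \<open>0 < t\<close> unfolding t_def[symmetric] by simp
    then show ?thesis using p q by (metis dvd_mult2 mult.commute)
  next
    case False
    have "even t"
    proof (rule ccontr)
      assume "odd t"
      then have "t dvd l - 1"
        using coprime_dvd_mult_right_iff[of t 2 "l - 1"] unfolding t_def by simp
      then show False using False by simp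
    qed
    then obtain k where k: "t = 2 * k" by (metis evenE)
    have "2 * k dvd m + 2" using k t_def by (metis gcd_dvd1)
    then obtain p where p: "m + 2 = k * (2 * p)" by (metis dvdE mult.assoc mult.commute)
    have "2 * k dvd 2 * (l - 1)" using k t_def by (metis gcd_dvd2)
    then obtain q where q: "l - 1 = k * q"
      by (metis dvdE mult_cancel_left1 nat_mult_dvd_cancel_disj zero_neq_numeral)
    have "m * l + 2 = k * (m * q + 2 * p)" using N unfolding p q by (simp add: algebra_simps)
    then have "k * (m * q + 2 * p) dvd k * (2 * n)" using dvd k unfolding t_def[symmetric]
      by (simp add: ac_simps)
    then have "m * q + 2 * p dvd 2 * n" using \<open>0 < t\<close> k by simp
    moreover have "even m" using \<open>even t\<close> t_def
      by (metis dvd_add_triv_right_iff dvd_trans gcd_dvd1)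
    then have "2 * n dvd n * m" by auto
    ultimately have "m * q + 2 * p dvd n * m" using dvd_trans by blast
    then show ?thesis using p q by (metis mult.commute mult.assoc)
  qed
qed

lemma fan_parameters_of_dvd:
  fixes m l n :: nat
  assumes l: "2 \<le> l"
    and dvd: "m * l + 2 dvd 2 * n \<or> m * l + 2 dvd gcd (m + 2) (2 * (l - 1)) * n"
  obtains k p q where "1 \<le> p" "1 \<le> q" "m * l + 2 = k * (m * q + p)" "m * q + p dvd n * m"
    "(k * p = m + 2 \<and> k * q = l - 1) \<or> (k = 2 \<and> p = 1 \<and> 2 * q = l)"
proof -
  have N: "m * l + 2 = m * (l - 1) + (m + 2)" using l by (cases l) auto
  consider (fans) k p q where "k * p = m + 2" "k * q = l - 1" "m * q + p dvd n * m"
    | (halves) q where "2 * q = l" "m * q + 1 dvd n * m"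
    using fan_parameters_of_dvd_two_mul[OF l] fan_parameters_of_dvd_gcd_mul[OF l] dvd by blast
  then show ?thesis
  proof cases
    case (fans k p q)
    have "p \<noteq> 0" using fans(1) by (rule contrapos_pn) simp
    moreover have "q \<noteq> 0" using fans(2) l by (rule_tac contrapos_pn) simp_all
    ultimately have "1 \<le> p" "1 \<le> q" by simp_all
    moreover have "m * l + 2 = k * (m * q + p)"
      using N unfolding fans(1,2)[symmetric] by (simp add: algebra_simps)
    ultimately show ?thesis using fans that by blast
  next
    case (halves q)
    then show ?thesis using that[of 1 q 2] l by (simp add: algebra_simps)
  qed
qed

section \<open>Angulations of P_N\<close>

context
  fixes d l N :: nat
  assumes two_le_d: "2 \<le> d" and one_le_l: "1 \<le> l" and N_eq: "N = (d - 1) * l + 2"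
begin

lemma noncrossing_family_of_partial_angulation:
  assumes "partial_angulation d N T"
  shows "noncrossing_family (d - 1) 0 (N - 1) (insert (0, N - 1) (endpoint_pairs T))"
    and "card (insert (0, N - 1) (endpoint_pairs T)) = card T + 1"
proof -
  have diags: "\<forall>D\<in>T. is_diag d N D" using assms unfolding partial_angulation_def by blast
  have pairs: "interval_diagonal (d - 1) 0 (N - 1) E \<and> E \<noteq> (0, N - 1)"
    if "E \<in> endpoint_pairs T" for E
    using that diags is_diag_doubleton_iff unfolding endpoint_pairs_def by auto
  have "endpoint_pairs T \<subseteq> {..N} \<times> {..N}"
  proof
    fix E assume "E \<in> endpoint_pairs T"
    then show "E \<in> {..N} \<times> {..N}"
      using pairs[of E] unfolding interval_diagonal_def by (cases E) auto
  qed
  then have "finite (endpoint_pairs T)" by (rule finite_subset) simp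
  moreover have "(0, N - 1) \<notin> endpoint_pairs T" using pairs by blast
  ultimately show "card (insert (0, N - 1) (endpoint_pairs T)) = card T + 1"
    by (simp add: card_endpoint_pairs[OF diags])
  have "1 \<le> (d - 1) * l" using two_le_d one_le_l by simp
  then have "interval_diagonal (d - 1) 0 (N - 1) (0, N - 1)"
    unfolding N_eq interval_diagonal_def by simp
  moreover have "noncrossing (0, N - 1) E" "noncrossing E (0, N - 1)"
    if "interval_diagonal (d - 1) 0 (N - 1) E" for E
    using that unfolding interval_diagonal_def noncrossing_def by auto
  moreover have "\<forall>E\<in>endpoint_pairs T. \<forall>E'\<in>endpoint_pairs T. noncrossing E E'"
    using partial_angulation_iff_endpoint_pairs[OF diags] assms by simp
  ultimately show "noncrossing_family (d - 1) 0 (N - 1) (insert (0, N - 1) (endpoint_pairs T))"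
    using pairs unfolding noncrossing_family_def by simp
qed

lemma maximal_noncrossing_family_of_angulation:
  assumes "angulation d N T"
  shows "maximal_noncrossing_family (d - 1) 0 (N - 1) (insert (0, N - 1) (endpoint_pairs T))"
proof -
  let ?F = "insert (0, N - 1) (endpoint_pairs T)"
  have pa: "partial_angulation d N T" using assms unfolding angulation_def by blast
  then have diags: "\<forall>D\<in>T. is_diag d N D" unfolding partial_angulation_def by blast
  have "E \<in> ?F" if dE: "interval_diagonal (d - 1) 0 (N - 1) E"
    and ncE: "\<forall>E'\<in>?F. noncrossing E E'" for E
  proof (cases "E = (0, N - 1)")
    case False
    obtain u v where E: "E = (u, v)" by fastforce
    then have "u < v" using dE unfolding interval_diagonal_def by simp
    have "is_diag d N {u, v}" using is_diag_doubleton_iff[OF \<open>u < v\<close>] dE False E by simp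
    then have diags': "\<forall>D\<in>insert {u, v} T. is_diag d N D" using diags by blast
    have "\<forall>E\<in>endpoint_pairs T. \<forall>E'\<in>endpoint_pairs T. noncrossing E E'"
      using partial_angulation_iff_endpoint_pairs[OF diags] pa by simp
    moreover have "noncrossing (u, v) E'" "noncrossing E' (u, v)" if "E' \<in> endpoint_pairs T" for E'
      using ncE that noncrossing_sym E by auto
    moreover have "noncrossing (u, v) (u, v)" unfolding noncrossing_def by simp
    ultimately have "partial_angulation d N (insert {u, v} T)"
      unfolding partial_angulation_iff_endpoint_pairs[OF diags'] endpoint_pairs_insert[OF \<open>u < v\<close>]
      by simp
    then have "insert {u, v} T = T" using assms unfolding angulation_def by blast
    then show ?thesis using E \<open>u < v\<close> unfolding endpoint_pairs_def by auto
  qed simp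
  then show ?thesis using noncrossing_family_of_partial_angulation(1)[OF pa]
    unfolding maximal_noncrossing_family_def by blast
qed

lemma card_partial_angulation_le:
  assumes "partial_angulation d N T"
  shows "card T + 1 \<le> l"
proof -
  have "card (insert (0, N - 1) (endpoint_pairs T)) \<le> (N - 1 - 0 - 1) div (d - 1)"
    by (rule card_noncrossing_family_le[OF noncrossing_family_of_partial_angulation(1)[OF assms]])
  moreover have "(N - 1 - 0 - 1) div (d - 1) = l" using two_le_d unfolding N_eq by simp
  ultimately show ?thesis using noncrossing_family_of_partial_angulation(2)[OF assms] by simp
qed

lemma card_angulation:
  assumes "angulation d N T"
  shows "card T + 1 = l"
proof -
  have pa: "partial_angulation d N T" using assms unfolding angulation_def by blast
  have "card (insert (0, N - 1) (endpoint_pairs T)) = l"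
    by (rule card_maximal_noncrossing_family[OF maximal_noncrossing_family_of_angulation[OF assms]])
      (use two_le_d in \<open>simp_all add: N_eq\<close>)
  then show ?thesis using noncrossing_family_of_partial_angulation(2)[OF pa] by simp
qed

lemma angulation_of_card:
  assumes "partial_angulation d N T" "l \<le> card T + 1"
  shows "angulation d N T"
  unfolding angulation_def
proof (intro conjI allI impI)
  fix T' assume T': "partial_angulation d N T' \<and> T \<subseteq> T'"
  have "finite T'" using T' finite_partial_angulation by blast
  have "card T' \<le> card T" using card_partial_angulation_le[of T'] assms(2) T' by simp
  moreover have "card T \<le> card T'" using card_mono[OF \<open>finite T'\<close>] T' by simp
  ultimately have "card T = card T'" by (rule antisym[rotated])
  from card_subset_eq[OF \<open>finite T'\<close> _ this] T' show "T' = T" by simp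
qed (rule assms(1))

text \<open>
  A diagonal fixed by a nontrivial rotation is a diameter, and so is its image under rotation
  by g, which is a different diameter because g is not a half turn; but distinct diameters cross.
\<close>

lemma rot_neq_of_rot_invariant_angulation:
  assumes ang: "angulation d N T" and inv: "rot N g ` T = T"
    and g: "0 < g" "g < N" "2 * g \<noteq> N" and D: "D \<in> T" and a: "0 < a" "a < N"
  shows "rot N a D \<noteq> D"
proof
  assume fixed: "rot N a D = D"
  have pa: "partial_angulation d N T" using ang unfolding angulation_def by blast
  then have diags: "\<forall>D\<in>T. is_diag d N D" unfolding partial_angulation_def by blast
  have diameter: "2 * a = N \<and> (\<exists>x. x + a < N \<and> E = {x, x + a})"
    if E: "E \<in> T" and fixed: "rot N a E = E" for E
  proof -
    obtain x y where "x < y" "y < N" "E = {x, y}" using diags E is_diag_obtain by blast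
    moreover have "2 * a = N \<and> y = x + a"
      using rot_doubleton_fixed[OF \<open>x < y\<close> \<open>y < N\<close> a] fixed \<open>E = {x, y}\<close> by simp
    ultimately show ?thesis by auto
  qed
  define D' where "D' = rot N g D"
  have "D' \<in> T" using D inv unfolding D'_def by blast
  moreover have "rot N a D' = D'"
    using fixed rot_rot[of N a g D] rot_rot[of N g a D] unfolding D'_def by (simp add: add.commute)
  ultimately obtain x' where x': "x' + a < N" "D' = {x', x' + a}" using diameter by blast
  obtain x where x: "x + a < N" "D = {x, x + a}" and "2 * a = N" using diameter D fixed by blast
  have "D' \<noteq> D"
  proof
    assume "D' = D"
    obtain y z where "y < z" "z < N" "D = {y, z}" using diags D is_diag_obtain by blast
    then have "2 * g = N"
      using rot_doubleton_fixed[OF _ _ g(1,2)] \<open>D' = D\<close> unfolding D'_def by simp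
    then show False using g(3) by simp
  qed
  then have "x \<noteq> x'" using x x' by auto
  then have "crosses D D'" using diameters_cross[OF \<open>2 * a = N\<close> x(1) x'(1)] a x x' by simp
  then show False using pa D \<open>D' \<in> T\<close> unfolding partial_angulation_def by blast
qed

lemma orbit_size_dvd_of_rot_invariant_angulation:
  assumes ang: "angulation d N T" and inv: "rot N g ` T = T" and k: "N = k * g" "3 \<le> k"
  shows "k dvd l - 1"
proof -
  have pa: "partial_angulation d N T" using ang unfolding angulation_def by blast
  have sub: "D \<subseteq> {..<N}" if "D \<in> T" for D
    using pa that unfolding partial_angulation_def is_diag_def by auto
  have "0 < N" using N_eq by simp
  then have "0 < g" using k(1) by (cases g) auto
  have g: "g < N" "2 * g \<noteq> N" using k \<open>0 < g\<close> by auto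
  have "k dvd card T"
  proof (rule card_dvd_of_fixpoint_free_funpow)
    show "finite T" using pa by (rule finite_partial_angulation)
    show "rot N g ` T \<subseteq> T" using inv by simp
    show "0 < k" using k(2) by simp
    show "\<forall>D\<in>T. (rot N g ^^ k) D = D"
    proof
      fix D assume "D \<in> T"
      have "(rot N g ^^ k) D = rot N N D"
        using funpow_rot[OF sub[OF \<open>D \<in> T\<close>]] k(1) by simp
      also have "\<dots> = rot N 0 D" using rot_mod[of N N D] by simp
      finally show "(rot N g ^^ k) D = D" using rot_0[OF sub[OF \<open>D \<in> T\<close>]] by simp
    qed
    show "\<forall>D\<in>T. \<forall>j. 0 < j \<and> j < k \<longrightarrow> (rot N g ^^ j) D \<noteq> D"
    proof (intro ballI allI impI)
      fix D j assume "D \<in> T" "0 < j \<and> j < k"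
      then have "0 < j * g" "j * g < N" using \<open>0 < g\<close> k(1) by auto
      then show "(rot N g ^^ j) D \<noteq> D"
        using rot_neq_of_rot_invariant_angulation[OF ang inv \<open>0 < g\<close> g \<open>D \<in> T\<close>] funpow_rot sub \<open>D \<in> T\<close>
        by simp
    qed
  qed
  moreover have "card T = l - 1" using card_angulation[OF ang] by simp
  ultimately show ?thesis by simp
qed

context
  fixes k p q P :: nat
  assumes P_eq: "P = (d - 1) * q + p" and N_fan: "N = k * P"
    and one_le_p: "1 \<le> p" and one_le_q: "1 \<le> q"
    and fan_shape: "(k * p = d + 1 \<and> k * q = l - 1) \<or> (k = 2 \<and> p = 1 \<and> 2 * q = l)"
begin

lemma fan_pair_cases:
  assumes "i < k" "j \<le> q"
  obtains (inner) "i * P + (d - 1) * j + 1 < N"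
      "fan_pair k P (d - 1) i j = (i * P, i * P + (d - 1) * j + 1)"
  | (wrap) "i = k - 1" "j = q" "p = 1" "2 \<le> k" "fan_pair k P (d - 1) i j = (0, (k - 1) * P)"
proof (cases "i * P + (d - 1) * j + 1 < N")
  case True
  then have "fan_pair k P (d - 1) i j = (i * P, i * P + (d - 1) * j + 1)"
    unfolding fan_pair_def N_fan by simp
  with True show ?thesis by (rule inner)
next
  case False
  have "0 < d - 1" using two_le_d by simp
  have w: "i = k - 1" "j = q" "p = 1"
    using fan_index_wrap[OF P_eq one_le_p \<open>0 < d - 1\<close> assms] False unfolding N_fan by simp_all
  have "2 \<le> k" using fan_shape two_le_d \<open>p = 1\<close> by auto
  moreover have "fan_pair k P (d - 1) i j = (0, (k - 1) * P)"
    using False w(1) unfolding fan_pair_def N_fan by simp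
  ultimately show ?thesis using w by (intro wrap)
qed

lemma fan_pair_le_block:
  assumes "j \<le> q"
  shows "i * P + (d - 1) * j + 1 \<le> (i + 1) * P"
  using fan_index_bound[OF P_eq one_le_p, of i "i + 1" j] assms by simp

lemma q_less_l: "q < l"
  using fan_shape one_le_q N_fan N_eq by (cases k) auto

lemma fan_pair_diagonal:
  assumes "i < k" "1 \<le> j" "j \<le> q"
  shows "interval_diagonal (d - 1) 0 (N - 1) (fan_pair k P (d - 1) i j)
    \<and> fan_pair k P (d - 1) i j \<noteq> (0, N - 1)"
  using assms(1,3)
proof (cases rule: fan_pair_cases)
  case inner
  have "(d - 1) * j < (d - 1) * l" using assms(3) q_less_l two_le_d by simp
  moreover have "1 \<le> (d - 1) * j" using assms(2) two_le_d by simp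
  moreover have "\<not> (i * P = 0 \<and> i * P + (d - 1) * j + 1 = N - 1)"
    using \<open>(d - 1) * j < (d - 1) * l\<close> N_eq by linarith
  ultimately show ?thesis using inner unfolding interval_diagonal_def by simp
next
  case wrap
  have "1 \<le> (d - 1) * q" using two_le_d one_le_q by simp
  then have "2 \<le> P" using P_eq wrap(3) by linarith
  have "(k - 1) * P = (k - 1) * ((d - 1) * q) + (k - 1)"
    unfolding P_eq wrap(3) by (simp only: distrib_left mult_1_right)
  then have "(k - 1) * P - 1 = (k - 1) * ((d - 1) * q) + (k - 2)" using wrap(4) by linarith
  moreover have "(d - 1) dvd k - 2" using fan_shape wrap(3) by (cases "k = 2") auto
  ultimately have "(d - 1) dvd (k - 1) * P - 1" by simp
  moreover have "2 \<le> (k - 1) * P" "(k - 1) * P < N - 1"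
  proof -
    have "(k - 1) * P + P = N" using wrap(4) N_fan by (simp add: algebra_simps)
    moreover have "1 * P \<le> (k - 1) * P" using wrap(4) by (intro mult_le_mono1) simp
    ultimately show "2 \<le> (k - 1) * P" "(k - 1) * P < N - 1" using \<open>2 \<le> P\<close> by linarith+
  qed
  ultimately show ?thesis using wrap(5) unfolding interval_diagonal_def by simp
qed

lemma noncrossing_fan_pair:
  assumes "i < k" "j \<le> q" "i' < k" "j' \<le> q"
  shows "noncrossing (fan_pair k P (d - 1) i j) (fan_pair k P (d - 1) i' j')"
  using assms(1,2)
proof (cases rule: fan_pair_cases)
  case inner
  note E = inner(2) fan_pair_le_block[OF assms(2), of i]
  show ?thesis using assms(3,4)
  proof (cases rule: fan_pair_cases)
    case inner
    then show ?thesis using E noncrossing_blocks[of _ i P _ i'] fan_pair_le_block[OF assms(4), of i']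
      by simp
  next
    case wrap
    have "noncrossing (0, (k - 1) * P) (fan_pair k P (d - 1) i j)"
      by (rule noncrossing_wrap_block[OF assms(1)]) (use E in simp_all)
    then show ?thesis using wrap(5) noncrossing_sym by simp
  qed
next
  case wrap
  note E = wrap(5)
  show ?thesis using assms(3,4)
  proof (cases rule: fan_pair_cases)
    case inner
    then show ?thesis using E noncrossing_wrap_block[OF assms(3)] fan_pair_le_block[OF assms(4), of i']
      by simp
  next
    case wrap
    then show ?thesis using E unfolding noncrossing_def by simp
  qed
qed

lemma card_fan_pairs: "l - 1 \<le> card ((\<lambda>(i, j). fan_pair k P (d - 1) i j) ` ({..<k} \<times> {1..q}))"
proof -
  let ?f = "\<lambda>(i, j). fan_pair k P (d - 1) i j" and ?I = "{..<k} \<times> {1..q}"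
    and ?J = "unwrapped_fan_indices k P (d - 1) q"
  have "0 < P" "0 < d - 1" using P_eq one_le_p two_le_d by auto
  have card_J: "card (?f ` ?J) = card ?J"
    using inj_on_fan_pair_unwrapped[OF \<open>0 < P\<close> \<open>0 < d - 1\<close>] by (rule card_image)
  have kq: "k * q \<le> card ?J + 1"
    using card_unwrapped_fan_indices(1)[OF P_eq one_le_p \<open>0 < d - 1\<close>] .
  have "?J \<subseteq> ?I" unfolding unwrapped_fan_indices_def by auto
  then have mono: "card (?f ` ?J) \<le> card (?f ` ?I)" by (intro card_mono image_mono) auto
  show ?thesis
  proof (cases "p = 1 \<and> 3 \<le> k")
    case False
    have "l - 1 \<le> card ?J"
    proof (cases "p = 1")
      case True
      then have "k = 2" "2 * q = l" using False fan_shape two_le_d by auto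
      then show ?thesis using kq by simp
    next
      case False
      then show ?thesis
        using card_unwrapped_fan_indices(2)[OF P_eq one_le_p \<open>0 < d - 1\<close>] fan_shape by auto
    qed
    then show ?thesis using card_J mono by linarith
  next
    case True
    then have "k * q = l - 1" using fan_shape two_le_d by auto
    have "(k - 1) * P + P = k * P" using True by (cases k) simp_all
    then have "(k - 1) * P + (d - 1) * q + 1 = k * P" using P_eq True by simp
    then have wrap: "(k - 1, q) \<in> ?I" "?f (k - 1, q) = (0, (k - 1) * P)"
      using True one_le_q unfolding fan_pair_def by auto
    have notin: "(0, (k - 1) * P) \<notin> ?f ` ?J"
      using wrapped_fan_pair_notin_unwrapped[OF P_eq one_le_p] True by simp
    have "finite ?I" by simp
    have "?f (k - 1, q) \<in> ?f ` ?I" by (rule imageI[OF wrap(1)])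
    then have "(0, (k - 1) * P) \<in> ?f ` ?I" by (simp only: wrap(2))
    from this image_mono[OF \<open>?J \<subseteq> ?I\<close>]
    have "insert (0, (k - 1) * P) (?f ` ?J) \<subseteq> ?f ` ?I" by (rule insert_subsetI)
    from card_mono[OF finite_imageI[OF \<open>finite ?I\<close>] this]
    have "card (insert (0, (k - 1) * P) (?f ` ?J)) \<le> card (?f ` ?I)" .
    moreover have "finite (?f ` ?J)" using finite_subset[OF \<open>?J \<subseteq> ?I\<close> \<open>finite ?I\<close>] by simp
    ultimately have "card ?J + 1 \<le> card (?f ` ?I)" using notin card_J by simp
    then show ?thesis using kq \<open>k * q = l - 1\<close> by linarith
  qed
qed

lemma angulation_fan_family: "angulation d N (fan_family k P (d - 1) q)"
proof -
  let ?S = "(\<lambda>(i, j). fan_pair k P (d - 1) i j) ` ({..<k} \<times> {1..q})"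
  have fan: "fan_family k P (d - 1) q = (\<lambda>E. {fst E, snd E}) ` ?S"
    by (rule fan_family_eq[OF P_eq one_le_p])
  have S_diag: "interval_diagonal (d - 1) 0 (N - 1) E \<and> E \<noteq> (0, N - 1)" if "E \<in> ?S" for E
    using that fan_pair_diagonal by auto
  then have lt: "\<forall>E\<in>?S. fst E < snd E" unfolding interval_diagonal_def by fastforce
  then have pairs: "endpoint_pairs (fan_family k P (d - 1) q) = ?S"
    unfolding fan by (rule endpoint_pairs_doubletons)
  have diags: "\<forall>D\<in>fan_family k P (d - 1) q. is_diag d N D"
  proof
    fix D assume "D \<in> fan_family k P (d - 1) q"
    then obtain E where "E \<in> ?S" "D = {fst E, snd E}" unfolding fan by blast
    moreover have "fst E < snd E" using lt \<open>E \<in> ?S\<close> by blast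
    ultimately show "is_diag d N D"
      using S_diag[OF \<open>E \<in> ?S\<close>] is_diag_doubleton_iff[of "fst E" "snd E" d N] by simp
  qed
  have "\<forall>E\<in>?S. \<forall>E'\<in>?S. noncrossing E E'" using noncrossing_fan_pair by auto
  then have "partial_angulation d N (fan_family k P (d - 1) q)"
    unfolding partial_angulation_iff_endpoint_pairs[OF diags] pairs .
  moreover have "card (fan_family k P (d - 1) q) = card ?S"
    using card_endpoint_pairs[OF diags] pairs by simp
  ultimately show ?thesis using angulation_of_card card_fan_pairs by simp
qed

end

lemma dvd_of_rho_invariant_angulation:
  assumes ang: "angulation d N T" and inv: "(rho_set N ^^ (n * (d - 1))) T = T"
  shows "N dvd 2 * n \<or> N dvd gcd (d + 1) (2 * (l - 1)) * n"
proof -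
  have sub: "\<forall>D\<in>T. D \<subseteq> {..<N}"
    using ang unfolding angulation_def partial_angulation_def is_diag_def by auto
  have "0 < N" using N_eq by simp
  define g where "g = gcd (n * (d - 1)) N"
  have "rot N (n * (d - 1) * (N - 1)) ` T = T" using inv funpow_rho_set[OF sub \<open>0 < N\<close>] by simp
  moreover have "gcd (n * (d - 1) * (N - 1)) N = g"
    unfolding g_def using coprime_diff_one_right_nat[OF \<open>0 < N\<close>] by (rule gcd_mult_left_right_cancel)
  ultimately have "rot N g ` T = T" using rot_image_gcd[OF sub] by metis
  have "g dvd N" "g dvd n * (d - 1)" unfolding g_def by simp_all
  then obtain k where k: "N = k * g" by (metis dvd_div_mult_self)
  have "d + 1 = (d - 1) + 2" using two_le_d by simp
  show ?thesis
  proof (cases "3 \<le> k")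
    case True
    then have "k dvd l - 1" using orbit_size_dvd_of_rot_invariant_angulation[OF ang \<open>rot N g ` T = T\<close> k] by simp
    then show ?thesis
      using dvd_gcd_mul_of_orbit_dvd[of "d - 1" l k g n] k N_eq \<open>g dvd n * (d - 1)\<close> one_le_l
        \<open>d + 1 = (d - 1) + 2\<close> by simp
  next
    case False
    have "k \<noteq> 0" using k \<open>0 < N\<close> by auto
    then have "k = 1 \<or> k = 2" using False by auto
    then have "N dvd 2 * g" using k by auto
    also have "2 * g dvd 2 * n * (d - 1)" using \<open>g dvd n * (d - 1)\<close> by (simp add: mult.assoc)
    finally show ?thesis
      using dvd_two_mul_or_dvd_gcd_mul[of "d - 1" l n] N_eq \<open>d + 1 = (d - 1) + 2\<close> by simp
  qed
qed

lemma rho_invariant_angulation_of_dvd: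
  assumes "2 \<le> l" and dvd: "N dvd 2 * n \<or> N dvd gcd (d + 1) (2 * (l - 1)) * n"
  obtains T where "angulation d N T" "(rho_set N ^^ (n * (d - 1))) T = T"
proof -
  have "d + 1 = (d - 1) + 2" using two_le_d by simp
  then obtain k p q where fan: "1 \<le> p" "1 \<le> q" "N = k * ((d - 1) * q + p)"
      "(d - 1) * q + p dvd n * (d - 1)"
      "(k * p = d + 1 \<and> k * q = l - 1) \<or> (k = 2 \<and> p = 1 \<and> 2 * q = l)"
    using fan_parameters_of_dvd[of l "d - 1" n] assms N_eq by metis
  define P where "P = (d - 1) * q + p"
  define T where "T = fan_family k P (d - 1) q"
  have ang: "angulation d N T"
    unfolding T_def using angulation_fan_family[OF P_def] fan unfolding P_def by blast
  have "0 < k" using fan(3) N_eq by (cases k) auto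
  then have "rot N P ` T = T" unfolding T_def fan(3) P_def[symmetric] by (rule fan_family_rot)
  moreover have sub: "\<forall>D\<in>T. D \<subseteq> {..<N}"
    using ang unfolding angulation_def partial_angulation_def is_diag_def by auto
  moreover obtain c where "n * (d - 1) = P * c" using fan(4) unfolding P_def by blast
  ultimately have "rot N (n * (d - 1) * (N - 1)) ` T = T"
    using rot_image_mult[of T N P "c * (N - 1)"] by (simp add: ac_simps)
  then have "(rho_set N ^^ (n * (d - 1))) T = T" using funpow_rho_set[OF sub] N_eq by simp
  with ang show ?thesis by (rule that)
qed

lemma rho_invariant_angulation_iff:
  assumes "2 \<le> l"
  shows "(\<exists>T. angulation d N T \<and> (rho_set N ^^ (n * (d - 1))) T = T)
    \<longleftrightarrow> N dvd 2 * n \<or> N dvd gcd (d + 1) (2 * (l - 1)) * n"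
proof
  assume "\<exists>T. angulation d N T \<and> (rho_set N ^^ (n * (d - 1))) T = T"
  then show "N dvd 2 * n \<or> N dvd gcd (d + 1) (2 * (l - 1)) * n"
    using dvd_of_rho_invariant_angulation by blast
next
  assume "N dvd 2 * n \<or> N dvd gcd (d + 1) (2 * (l - 1)) * n"
  then obtain T where "angulation d N T" "(rho_set N ^^ (n * (d - 1))) T = T"
    by (rule rho_invariant_angulation_of_dvd[OF assms])
  then show "\<exists>T. angulation d N T \<and> (rho_set N ^^ (n * (d - 1))) T = T" by blast
qed

end

lemma angulation_digon: "angulation d 2 {}"
  unfolding angulation_def partial_angulation_def is_diag_def by auto

theorem mainTheorem9:
  fixes d l n :: nat
  assumes "d \<ge> 1" and "l \<ge> 2" and "n \<ge> 1"
  shows "(\<exists>T. angulation d ((d - 1) * l + 2) T \<and>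
            (rho_set ((d - 1) * l + 2) ^^ (n * (d - 1))) T = T)
         \<longleftrightarrow> (((d - 1) * l + 2) dvd (2 * n) \<or>
              ((d - 1) * l + 2) dvd (gcd (d + 1) (2 * (l - 1)) * n))"
proof (cases "d = 1")
  case True
  then have N: "(d - 1) * l + 2 = 2" and j: "n * (d - 1) = 0" by simp_all
  have "angulation d ((d - 1) * l + 2) {} \<and> (rho_set ((d - 1) * l + 2) ^^ (n * (d - 1))) {} = {}"
    unfolding N j using angulation_digon by simp
  moreover have "(d - 1) * l + 2 dvd 2 * n" unfolding N by simp
  ultimately show ?thesis by (intro iffI disjI1 exI) simp_all
next
  case False
  then have "2 \<le> d" using assms(1) by simp
  moreover have "1 \<le> l" using assms(2) by simp
  ultimately show ?thesis using rho_invariant_angulation_iff assms(2) by simp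
qed

end
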